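(* Let $G$ be a well-bicovered graph and let $e$ be an edge of $G$ incident with a vertex $y$ of degree $2$. Then the graph $G'$ obtained from $G$ by replacing the edge $e$ by a path of length three (i.e., subdividing $e$ with two new vertices) is well-bicovered.
   Context: All graphs are finite and simple; "subgraph" means induced subgraph. A graph is well-bicovered if every vertex-inclusion-maximal induced bipartite subgraph has the same order. *)

theory Defs
  imports Main
begin

definition simple_graph :: "'a set \<Rightarrow> 'a set set \<Rightarrow> bool" where
  "simple_graph V E \<longleftrightarrow> finite V \<and> (\<forall>e\<in>E. e \<subseteq> V \<and> card e = 2)"

definition degree :: "'a set set \<Rightarrow> 'a \<Rightarrow> nat" where
  "degree E v = card {e\<in>E. v \<in> e}"

definition induces_bipartite :: "'a set set \<Rightarrow> 'a set \<Rightarrow> bool" where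
  "induces_bipartite E S \<longleftrightarrow>
     (\<exists>A B. A \<union> B = S \<and> A \<inter> B = {} \<and>
        (\<forall>e\<in>E. e \<subseteq> S \<longrightarrow> \<not> e \<subseteq> A \<and> \<not> e \<subseteq> B))"

definition maximal_bipartite :: "'a set \<Rightarrow> 'a set set \<Rightarrow> 'a set \<Rightarrow> bool" where
  "maximal_bipartite V E S \<longleftrightarrow> S \<subseteq> V \<and> induces_bipartite E S \<and>
     (\<forall>T. S \<subset> T \<and> T \<subseteq> V \<longrightarrow> \<not> induces_bipartite E T)"

definition well_bicovered :: "'a set \<Rightarrow> 'a set set \<Rightarrow> bool" where
  "well_bicovered V E \<longleftrightarrow>
     (\<forall>S T. maximal_bipartite V E S \<and> maximal_bipartite V E T \<longrightarrow> card S = card T)"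

end

theory Submission
  imports Defs
begin

text \<open>Replacing the edge yz by the path y a b z lengthens it by two, so parities of cycles
  are unchanged: for U \<subseteq> V, U is bipartite in G iff U \<union> {a, b} is bipartite in G'. Hence
  a maximal bipartite set of G' containing a and b is T \<union> {a, b} for a maximal bipartite T
  of G. Because y has degree two, y, a, b are the inner vertices of an induced path x y a b z
  of G', and any proper subset of {y, a, b} can be added to a bipartite set avoiding them.
  So a maximal bipartite set of G' meets {y, a, b} in at least two vertices, and if it misses
  a or b, exchanging its part of {y, a, b} for {a, b} gives a maximal bipartite set of the same
  size. Thus all maximal bipartite sets of G' have size two more than those of G.\<close>

definition proper_bicolouring :: "'a set set \<Rightarrow> 'a set \<Rightarrow> ('a \<Rightarrow> bool) \<Rightarrow> bool" where
  "proper_bicolouring E S c \<longleftrightarrow> (\<forall>e\<in>E. e \<subseteq> S \<longrightarrow> (\<exists>u\<in>e. c u) \<and> (\<exists>u\<in>e. \<not> c u))"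

lemma induces_bipartite_iff_proper_bicolouring:
  "induces_bipartite E S \<longleftrightarrow> (\<exists>c. proper_bicolouring E S c)"
proof
  assume "induces_bipartite E S"
  then obtain A B where "A \<union> B = S" "\<forall>e\<in>E. e \<subseteq> S \<longrightarrow> \<not> e \<subseteq> A \<and> \<not> e \<subseteq> B"
    unfolding induces_bipartite_def by blast
  then have "proper_bicolouring E S (\<lambda>v. v \<in> A)"
    unfolding proper_bicolouring_def by blast
  then show "\<exists>c. proper_bicolouring E S c" by blast
next
  assume "\<exists>c. proper_bicolouring E S c"
  then obtain c where "proper_bicolouring E S c" by blast
  then have split: "\<forall>e\<in>E. e \<subseteq> S \<longrightarrow> \<not> e \<subseteq> {v\<in>S. c v} \<and> \<not> e \<subseteq> {v\<in>S. \<not> c v}"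
    unfolding proper_bicolouring_def by fast
  show "induces_bipartite E S"
    unfolding induces_bipartite_def
    by (intro exI[of _ "{v\<in>S. c v}"] exI[of _ "{v\<in>S. \<not> c v}"] conjI split) auto
qed

lemma proper_bicolouring_subset:
  "proper_bicolouring E S c \<Longrightarrow> T \<subseteq> S \<Longrightarrow> proper_bicolouring E T c"
  unfolding proper_bicolouring_def by (meson subset_trans)

lemma induces_bipartite_subset:
  "induces_bipartite E S \<Longrightarrow> T \<subseteq> S \<Longrightarrow> induces_bipartite E T"
  using proper_bicolouring_subset unfolding induces_bipartite_iff_proper_bicolouring by blast

lemma proper_bicolouring_cong:
  assumes "\<And>v. v \<in> S \<Longrightarrow> c v = c' v"
  shows "proper_bicolouring E S c \<longleftrightarrow> proper_bicolouring E S c'"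
proof -
  have "(\<exists>u\<in>e. c u) \<and> (\<exists>u\<in>e. \<not> c u) \<longleftrightarrow> (\<exists>u\<in>e. c' u) \<and> (\<exists>u\<in>e. \<not> c' u)"
    if "e \<subseteq> S" for e
    using that assms by (metis subsetD)
  then show ?thesis unfolding proper_bicolouring_def by blast
qed

lemma proper_bicolouringD:
  "proper_bicolouring E S c \<Longrightarrow> e \<in> E \<Longrightarrow> e \<subseteq> S \<Longrightarrow> (\<exists>u\<in>e. c u) \<and> (\<exists>u\<in>e. \<not> c u)"
  unfolding proper_bicolouring_def by simp

lemma proper_bicolouring_edge:
  assumes "proper_bicolouring E S c" "{u, v} \<in> E" "u \<in> S" "v \<in> S"
  shows "c u \<noteq> c v"
  using proper_bicolouringD[OF assms(1,2)] assms(3,4) by auto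

lemma proper_bicolouring_separate_edge:
  assumes "proper_bicolouring E S c" "{u, v} \<in> E" "u \<noteq> v"
  obtains c' where "proper_bicolouring E S c'" "c' u \<noteq> c' v"
proof -
  consider "u \<in> S" "v \<in> S" | "u \<notin> S" | "v \<notin> S" by blast
  then show thesis
  proof cases
    case 1
    show thesis by (rule that[OF assms(1) proper_bicolouring_edge[OF assms(1,2) 1]])
  next
    case 2
    have "proper_bicolouring E S (c(u := \<not> c v)) \<longleftrightarrow> proper_bicolouring E S c"
      by (rule proper_bicolouring_cong) (use 2 in auto)
    then show thesis by (intro that) (use assms in auto)
  next
    case 3
    have "proper_bicolouring E S (c(v := \<not> c u)) \<longleftrightarrow> proper_bicolouring E S c"
      by (rule proper_bicolouring_cong) (use 3 in auto)
    then show thesis by (intro that) (use assms in auto)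
  qed
qed

text \<open>A vertex with at most one neighbour in S can be added to S, coloured against it.\<close>
lemma induces_bipartite_insert_pendant:
  assumes "induces_bipartite E S" "v \<noteq> w"
    and "\<forall>e\<in>E. v \<in> e \<longrightarrow> e \<subseteq> insert v S \<longrightarrow> e = {v, w}"
  shows "induces_bipartite E (insert v S)"
proof -
  obtain c where c: "proper_bicolouring E S c"
    using assms(1) induces_bipartite_iff_proper_bicolouring by blast
  have "proper_bicolouring E (insert v S) (c(v := \<not> c w))"
    unfolding proper_bicolouring_def
  proof (intro ballI impI)
    fix e assume e: "e \<in> E" "e \<subseteq> insert v S"
    show "(\<exists>u\<in>e. (c(v := \<not> c w)) u) \<and> (\<exists>u\<in>e. \<not> (c(v := \<not> c w)) u)"
    proof (cases "v \<in> e")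
      case True
      then have "e = {v, w}" using assms(3) e by blast
      then show ?thesis using assms(2) by auto
    next
      case False
      then have "(\<exists>u\<in>e. c u) \<and> (\<exists>u\<in>e. \<not> c u)"
        using c e unfolding proper_bicolouring_def by blast
      then show ?thesis using False by (metis fun_upd_other)
    qed
  qed
  then show ?thesis using induces_bipartite_iff_proper_bicolouring by blast
qed

lemma induces_bipartite_insert_two_neighbours:
  assumes "induces_bipartite E S" "v \<noteq> w"
    and "\<And>e. e \<in> E \<Longrightarrow> v \<in> e \<Longrightarrow> e = {v, w} \<or> e = {v, u}" "u \<notin> insert v S"
  shows "induces_bipartite E (insert v S)"
  using assms by (intro induces_bipartite_insert_pendant) auto

lemma maximal_bipartiteD:
  "maximal_bipartite V E S \<Longrightarrow> S \<subset> T \<Longrightarrow> T \<subseteq> V \<Longrightarrow> \<not> induces_bipartite E T"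
  unfolding maximal_bipartite_def by simp

lemma maximal_bipartite_not_insert:
  assumes "maximal_bipartite V E S" "v \<in> V - S"
  shows "\<not> induces_bipartite E (insert v S)"
proof (rule maximal_bipartiteD[OF assms(1)])
  show "S \<subset> insert v S" using assms(2) by auto
  show "insert v S \<subseteq> V" using assms unfolding maximal_bipartite_def by auto
qed

lemma maximal_bipartiteI_insert:
  assumes "S \<subseteq> V" "induces_bipartite E S"
    and "\<And>v. v \<in> V - S \<Longrightarrow> \<not> induces_bipartite E (insert v S)"
  shows "maximal_bipartite V E S"
  unfolding maximal_bipartite_def
proof (intro conjI allI impI assms(1,2))
  fix T assume T: "S \<subset> T \<and> T \<subseteq> V"
  then obtain v where v: "v \<in> T - S" by blast
  then have "insert v S \<subseteq> T" using T by auto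
  moreover have "\<not> induces_bipartite E (insert v S)" using assms(3) v T by auto
  ultimately show "\<not> induces_bipartite E T" using induces_bipartite_subset by metis
qed

lemma degree_two_otherE:
  assumes "simple_graph V E" "{y, z} \<in> E" "degree E y = 2"
  obtains x where "x \<noteq> y" "\<forall>e\<in>E. y \<in> e \<longrightarrow> e = {y, z} \<or> e = {y, x}"
proof -
  let ?N = "{e\<in>E. y \<in> e}"
  obtain e e' where ee': "?N = {e, e'}"
    using assms(3) unfolding degree_def by (meson card_2_iff)
  moreover have "{y, z} \<in> ?N" using assms(2) by simp
  ultimately obtain f where N: "?N = {{y, z}, f}" by (auto simp: insert_commute)
  then have f: "f \<in> E" "y \<in> f" by (metis (no_types, lifting) insertCI mem_Collect_eq)+
  have "card f = 2" using f(1) assms(1) unfolding simple_graph_def by simp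
  then obtain x where "f = {y, x}" "x \<noteq> y"
    using f(2) by (metis card_2_iff doubleton_eq_iff insertE singletonD)
  moreover have "\<forall>e\<in>E. y \<in> e \<longrightarrow> e = {y, z} \<or> e = f"
    using N by (metis (no_types, lifting) insertE mem_Collect_eq singletonD)
  ultimately show thesis using that by simp
qed

locale double_subdivision =
  fixes V :: "'a set" and E :: "'a set set" and y z a b :: 'a
  assumes simple: "simple_graph V E"
    and edge_yz: "{y, z} \<in> E"
    and a_notin_V: "a \<notin> V" and b_notin_V: "b \<notin> V" and a_neq_b: "a \<noteq> b"
begin

abbreviation "V' \<equiv> V \<union> {a, b}"
abbreviation "E' \<equiv> (E - {{y, z}}) \<union> {{y, a}, {a, b}, {b, z}}"

lemma edge_subset_V: "e \<in> E \<Longrightarrow> e \<subseteq> V"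
  using simple unfolding simple_graph_def by blast

lemma finite_V': "finite V'"
  using simple unfolding simple_graph_def by blast

lemma y_neq_z: "y \<noteq> z"
  using simple edge_yz unfolding simple_graph_def by fastforce

lemma new_vertices_distinct: "a \<noteq> y" "a \<noteq> z" "b \<noteq> y" "b \<noteq> z"
  using edge_subset_V[OF edge_yz] a_notin_V b_notin_V by auto

lemma bipartite_iff_subdivided:
  assumes "U \<subseteq> V"
  shows "induces_bipartite E U \<longleftrightarrow> induces_bipartite E' (U \<union> {a, b})"
proof
  assume "induces_bipartite E U"
  then obtain c where c: "proper_bicolouring E U c" "c y \<noteq> c z"
    using proper_bicolouring_separate_edge[OF _ edge_yz y_neq_z]
    unfolding induces_bipartite_iff_proper_bicolouring by metis
  define h where "h = c(a := \<not> c y, b := c y)"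
  have h_path: "h y \<noteq> h a" "h a \<noteq> h b" "h b \<noteq> h z"
    unfolding h_def using c(2) new_vertices_distinct a_neq_b by auto
  have "proper_bicolouring E' (U \<union> {a, b}) h"
    unfolding proper_bicolouring_def
  proof (intro ballI impI)
    fix e assume e: "e \<in> E'" "e \<subseteq> U \<union> {a, b}"
    show "(\<exists>u\<in>e. h u) \<and> (\<exists>u\<in>e. \<not> h u)"
    proof (cases "e \<in> E")
      case True
      then have "e \<subseteq> U" "\<forall>u\<in>e. h u = c u"
        using e(2) edge_subset_V a_notin_V b_notin_V unfolding h_def by auto
      then show ?thesis using c(1) True unfolding proper_bicolouring_def by (metis (no_types, lifting))
    next
      case False
      then have "e = {y, a} \<or> e = {a, b} \<or> e = {b, z}" using e(1) by blast
      then show ?thesis using h_path by (cases "h a") auto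
    qed
  qed
  then show "induces_bipartite E' (U \<union> {a, b})"
    using induces_bipartite_iff_proper_bicolouring by blast
next
  assume "induces_bipartite E' (U \<union> {a, b})"
  then obtain c where c: "proper_bicolouring E' (U \<union> {a, b}) c"
    using induces_bipartite_iff_proper_bicolouring by blast
  have "proper_bicolouring E U c"
    unfolding proper_bicolouring_def
  proof (intro ballI impI)
    fix e assume e: "e \<in> E" "e \<subseteq> U"
    show "(\<exists>u\<in>e. c u) \<and> (\<exists>u\<in>e. \<not> c u)"
    proof (cases "e = {y, z}")
      case True
      then have "y \<in> U \<union> {a, b}" "z \<in> U \<union> {a, b}" using e(2) by auto
      then have "c y \<noteq> c a" "c a \<noteq> c b" "c b \<noteq> c z"
        using proper_bicolouring_edge[OF c] by simp_all
      then show ?thesis using True by (cases "c y") auto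
    next
      case False
      then show ?thesis using c e unfolding proper_bicolouring_def by blast
    qed
  qed
  then show "induces_bipartite E U"
    using induces_bipartite_iff_proper_bicolouring by blast
qed

lemma maximal_bipartite_remove_subdivision:
  assumes S: "maximal_bipartite V' E' S" and "a \<in> S" "b \<in> S"
  shows "maximal_bipartite V E (S - {a, b})"
proof (rule maximal_bipartiteI_insert)
  have S_eq: "S = (S - {a, b}) \<union> {a, b}" using assms(2,3) by blast
  show U_sub: "S - {a, b} \<subseteq> V" using S unfolding maximal_bipartite_def by blast
  show "induces_bipartite E (S - {a, b})"
    using S S_eq bipartite_iff_subdivided[OF U_sub] unfolding maximal_bipartite_def by simp
  fix v assume v: "v \<in> V - (S - {a, b})"
  then have "insert v (S - {a, b}) \<union> {a, b} = insert v S" "v \<in> V' - S" "insert v (S - {a, b}) \<subseteq> V"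
    using U_sub assms(2,3) a_notin_V b_notin_V by auto
  then show "\<not> induces_bipartite E (insert v (S - {a, b}))"
    using bipartite_iff_subdivided maximal_bipartite_not_insert[OF S] by metis
qed

lemma subdivided_edges_at_new_vertex:
  "e \<in> E' \<Longrightarrow> a \<in> e \<or> b \<in> e \<Longrightarrow> e = {y, a} \<or> e = {a, b} \<or> e = {b, z}"
  using edge_subset_V a_notin_V b_notin_V by blast

lemma subdivided_edges_at_a: "e \<in> E' \<Longrightarrow> a \<in> e \<Longrightarrow> e = {a, y} \<or> e = {a, b}"
  using subdivided_edges_at_new_vertex[of e] a_neq_b new_vertices_distinct by auto

lemma subdivided_edges_at_b: "e \<in> E' \<Longrightarrow> b \<in> e \<Longrightarrow> e = {b, a} \<or> e = {b, z}"
  using subdivided_edges_at_new_vertex[of e] a_neq_b new_vertices_distinct by auto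

end

locale double_subdivision_at_degree_two = double_subdivision +
  fixes x :: 'a
  assumes x_neq_y: "x \<noteq> y"
    and edges_at_y: "\<forall>e\<in>E. y \<in> e \<longrightarrow> e = {y, z} \<or> e = {y, x}"
begin

abbreviation "inner_vertices \<equiv> {y, a, b}"

lemma subdivided_edges_at_y: "e \<in> E' \<Longrightarrow> y \<in> e \<Longrightarrow> e = {y, x} \<or> e = {y, a}"
  using edges_at_y a_neq_b new_vertices_distinct y_neq_z by blast

lemma inner_vertices_subset: "inner_vertices \<subseteq> V'"
  using edge_subset_V[OF edge_yz] by auto

lemma inner_vertices_proper_parts:
  "{y, a} \<subset> inner_vertices" "{y, b} \<subset> inner_vertices" "{a, b} \<subset> inner_vertices"
  using a_neq_b new_vertices_distinct by auto

lemma induces_bipartite_add_inner_vertices: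
  assumes W: "induces_bipartite E' W" "W \<inter> inner_vertices = {}"
    and Q: "Q \<subset> inner_vertices"
  shows "induces_bipartite E' (W \<union> Q)"
proof -
  have W_y: "induces_bipartite E' (insert y W)"
    by (rule induces_bipartite_insert_two_neighbours[of _ _ y x a])
      (use W x_neq_y new_vertices_distinct subdivided_edges_at_y in auto)
  have W_b: "induces_bipartite E' (insert b W)"
    by (rule induces_bipartite_insert_two_neighbours[of _ _ b z a])
      (use W a_neq_b new_vertices_distinct subdivided_edges_at_b in auto)
  have "induces_bipartite E' (insert a (insert b W))"
    by (rule induces_bipartite_insert_two_neighbours[of _ _ a b y])
      (use W W_b a_neq_b new_vertices_distinct subdivided_edges_at_a in auto)
  moreover have "induces_bipartite E' (insert a (insert y W))"
    by (rule induces_bipartite_insert_two_neighbours[of _ _ a y b])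
      (use W W_y a_neq_b new_vertices_distinct subdivided_edges_at_a in auto)
  moreover have "induces_bipartite E' (insert b (insert y W))"
    by (rule induces_bipartite_insert_two_neighbours[of _ _ b z a])
      (use W W_y a_neq_b new_vertices_distinct subdivided_edges_at_b in auto)
  moreover have "Q \<subseteq> {a, b} \<or> Q \<subseteq> {y, a} \<or> Q \<subseteq> {y, b}" using Q by blast
  ultimately show ?thesis
    using induces_bipartite_subset[of E' _ "W \<union> Q"] by blast
qed

lemma maximal_bipartite_meets_inner_vertices:
  assumes S: "maximal_bipartite V' E' S" and "a \<notin> S \<or> b \<notin> S"
  obtains Q where "S = (S - inner_vertices) \<union> Q" "Q \<subset> inner_vertices" "card Q = 2"
proof -
  let ?W = "S - inner_vertices"
  have S_sub: "S \<subseteq> V'" and S_bip: "induces_bipartite E' S"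
    using S unfolding maximal_bipartite_def by auto
  have fill: "S = ?W \<union> Q" if "S \<subseteq> ?W \<union> Q" "Q \<subset> inner_vertices" for Q
  proof (rule ccontr)
    assume "S \<noteq> ?W \<union> Q"
    with that(1) have "S \<subset> ?W \<union> Q" by blast
    moreover have "?W \<union> Q \<subseteq> V'" using S_sub inner_vertices_subset that(2) by blast
    moreover have "induces_bipartite E' (?W \<union> Q)"
      using induces_bipartite_subset[OF S_bip, of ?W] that(2)
      by (intro induces_bipartite_add_inner_vertices) auto
    ultimately show False using maximal_bipartiteD[OF S] by blast
  qed
  show thesis
  proof (cases "a \<in> S")
    case True
    with assms(2) inner_vertices_proper_parts(1) have "S = ?W \<union> {y, a}"
      by (intro fill) auto
    from this inner_vertices_proper_parts(1) show thesis
      by (rule that) (simp add: new_vertices_distinct[symmetric])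
  next
    case False
    with inner_vertices_proper_parts(2) have "S = ?W \<union> {y, b}"
      by (intro fill) auto
    from this inner_vertices_proper_parts(2) show thesis
      by (rule that) (simp add: new_vertices_distinct[symmetric])
  qed
qed

lemma maximal_bipartite_replace_inner_vertices:
  assumes S: "maximal_bipartite V' E' (W \<union> Q)"
    and W: "W \<inter> inner_vertices = {}" and Q: "Q \<subset> inner_vertices"
  shows "maximal_bipartite V' E' (W \<union> {a, b})"
proof (rule maximal_bipartiteI_insert)
  have S_sub: "W \<union> Q \<subseteq> V'" and S_bip: "induces_bipartite E' (W \<union> Q)"
    using S unfolding maximal_bipartite_def by auto
  have W_bip: "induces_bipartite E' W"
    using induces_bipartite_subset[OF S_bip] by simp
  show "W \<union> {a, b} \<subseteq> V'" using S_sub by auto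
  show "induces_bipartite E' (W \<union> {a, b})"
    by (rule induces_bipartite_add_inner_vertices[OF W_bip W inner_vertices_proper_parts(3)])
  fix v assume v: "v \<in> V' - (W \<union> {a, b})"
  show "\<not> induces_bipartite E' (insert v (W \<union> {a, b}))"
  proof (cases "v = y")
    case True
    then have "insert v (W \<union> {a, b}) = W \<union> inner_vertices" by auto
    then have "W \<union> Q \<subset> insert v (W \<union> {a, b})" "insert v (W \<union> {a, b}) \<subseteq> V'"
      using Q W S_sub inner_vertices_subset by auto
    then show ?thesis using maximal_bipartiteD[OF S] by blast
  next
    case False
    then have v_inner: "v \<notin> inner_vertices" and v_S: "v \<in> V' - (W \<union> Q)"
      using v Q by auto
    show ?thesis
    proof
      assume "induces_bipartite E' (insert v (W \<union> {a, b}))"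
      then have "induces_bipartite E' (insert v W)"
        by (rule induces_bipartite_subset) auto
      then have "induces_bipartite E' (insert v W \<union> Q)"
        using W v_inner Q by (intro induces_bipartite_add_inner_vertices) auto
      then show False
        using maximal_bipartite_not_insert[OF S v_S] by simp
    qed
  qed
qed

lemma maximal_bipartite_exchange:
  assumes S: "maximal_bipartite V' E' S"
  obtains S' where "maximal_bipartite V' E' S'" "a \<in> S'" "b \<in> S'" "card S' = card S"
proof (cases "a \<in> S \<and> b \<in> S")
  case True
  then show thesis using that S by blast
next
  case False
  let ?W = "S - inner_vertices"
  obtain Q where Q: "S = ?W \<union> Q" "Q \<subset> inner_vertices" "card Q = 2"
    using maximal_bipartite_meets_inner_vertices[OF S] False by blast
  have W: "?W \<inter> inner_vertices = {}" by blast
  have "finite ?W"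
    using S finite_subset[OF _ finite_V'] unfolding maximal_bipartite_def by blast
  moreover have "finite Q" using Q(3) card.infinite by fastforce
  moreover have "?W \<inter> Q = {}" using Q(2) by blast
  ultimately have "card (?W \<union> {a, b}) = card S"
    using Q(1,3) a_neq_b card_Un_disjoint[of ?W Q] card_Un_disjoint[of ?W "{a, b}"] by simp
  moreover have "maximal_bipartite V' E' (?W \<union> {a, b})"
    using maximal_bipartite_replace_inner_vertices[OF _ W Q(2)] S Q(1) by simp
  ultimately show thesis using that by blast
qed

lemma maximal_bipartite_subdivided_card:
  assumes "maximal_bipartite V' E' S"
  obtains T where "maximal_bipartite V E T" "card S = card T + 2"
proof -
  obtain S' where S': "maximal_bipartite V' E' S'" "a \<in> S'" "b \<in> S'" "card S' = card S"
    using maximal_bipartite_exchange[OF assms] .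
  have "finite S'"
    using S'(1) finite_subset[OF _ finite_V'] unfolding maximal_bipartite_def by simp
  then have "card S' = card (S' - {a, b}) + 2"
    using S'(2,3) a_neq_b card_Diff_subset[of "{a, b}" S'] card_mono[of S' "{a, b}"] by simp
  then show thesis
    using that maximal_bipartite_remove_subdivision[OF S'(1-3)] S'(4) by simp
qed

end

theorem mainTheorem12:
  fixes V :: "'a set" and E :: "'a set set" and y z a b :: 'a
  assumes "simple_graph V E"
    and "well_bicovered V E"
    and "{y, z} \<in> E"
    and "degree E y = 2"
    and "a \<notin> V" and "b \<notin> V" and "a \<noteq> b"
  shows "well_bicovered (V \<union> {a, b})
           ((E - {{y, z}}) \<union> {{y, a}, {a, b}, {b, z}})"
proof -
  obtain x where "x \<noteq> y" "\<forall>e\<in>E. y \<in> e \<longrightarrow> e = {y, z} \<or> e = {y, x}"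
    using degree_two_otherE[OF assms(1,3,4)] .
  then interpret double_subdivision_at_degree_two V E y z a b x
    using assms by unfold_locales auto
  show ?thesis
    unfolding well_bicovered_def
  proof (intro allI impI)
    fix S T assume "maximal_bipartite V' E' S \<and> maximal_bipartite V' E' T"
    then have S: "maximal_bipartite V' E' S" and T: "maximal_bipartite V' E' T" by simp_all
    obtain S\<^sub>0 where "maximal_bipartite V E S\<^sub>0" "card S = card S\<^sub>0 + 2"
      using maximal_bipartite_subdivided_card[OF S] .
    moreover obtain T\<^sub>0 where "maximal_bipartite V E T\<^sub>0" "card T = card T\<^sub>0 + 2"
      using maximal_bipartite_subdivided_card[OF T] .
    ultimately show "card S = card T"
      using assms(2)[unfolded well_bicovered_def, rule_format, of S\<^sub>0 T\<^sub>0] by simp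
  qed
qed

end
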